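(* Let $(H,+,\circ)$ be a commutative multiplicative hyperring with identity, let $m\geq 1$, and let $P$ be a proper hyperideal of $H$. If $M_m(P)$ is an sdf-absorbing hyperideal of $M_m(H)$, then $P$ is an sdf-absorbing hyperideal of $H$.
   Context: A commutative multiplicative hyperring $(H,+,\circ)$ consists of an abelian group $(H,+)$ and an associative, commutative hyperoperation $\circ: H\times H\to P^*(H)$ with $x\circ(y+z)\subseteq x\circ y+x\circ z$ and $x\circ(-y)=-(x\circ y)=(-x)\circ y$. For subsets $A,B$, $A\circ B=\bigcup_{a\in A,b\in B}a\circ b$, $A\pm B=\{a\pm b\}$; $x^2=x\circ x$. Identity: $x\in x\circ 1$. A hyperideal is a nonempty $P$ with $x-y\in P$ and $r\circ x\subseteq P$ for $x,y\in P$, $r\in H$. $M_m(H)$ is the multiplicative hyperring of $m\times m$ matrices over $H$ with entrywise addition and hyperproduct $A\circ B=\{C: c_{ij}\in\sum_{k=1}^m a_{ik}\circ b_{kj}\}$; sets of matrices are compared entrywise. $M_m(P)$ is the set of matrices with all entries in $P$. A proper hyperideal $P$ (of $H$, or analogously of $M_m(H)$) is sdf-absorbing if whenever $x,y$ are nonzero elements and $x^2-y^2\subseteq P$, then $x-y\in P$ or $x+y\in P$. *)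

theory Defs
  imports Main "HOL-Library.Function_Algebras"
begin

text \<open>A hyperoperation on a type is a function into subsets; the additive
abelian group is the whole type with its ab_group_add structure.
Matrices of size m x m over H are represented as functions 'n => 'n => 'a
for a finite (nonempty) index type 'n with CARD('n) = m.\<close>

definition set_hmul :: "('a \<Rightarrow> 'a \<Rightarrow> 'a set) \<Rightarrow> 'a set \<Rightarrow> 'a set \<Rightarrow> 'a set" where
  "set_hmul mul A B = (\<Union>a\<in>A. \<Union>b\<in>B. mul a b)"

definition set_add :: "'a::ab_group_add set \<Rightarrow> 'a set \<Rightarrow> 'a set" where
  "set_add A B = {a + b | a b. a \<in> A \<and> b \<in> B}"

definition set_diff :: "'a::ab_group_add set \<Rightarrow> 'a set \<Rightarrow> 'a set" where
  "set_diff A B = {a - b | a b. a \<in> A \<and> b \<in> B}"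

definition set_neg :: "'a::ab_group_add set \<Rightarrow> 'a set" where
  "set_neg A = {- a | a. a \<in> A}"

definition comm_mult_hyperring :: "('a::ab_group_add \<Rightarrow> 'a \<Rightarrow> 'a set) \<Rightarrow> bool" where
  "comm_mult_hyperring mul \<longleftrightarrow>
     (\<forall>x y. mul x y \<noteq> {}) \<and>
     (\<forall>x y z. set_hmul mul (mul x y) {z} = set_hmul mul {x} (mul y z)) \<and>
     (\<forall>x y. mul x y = mul y x) \<and>
     (\<forall>x y z. mul x (y + z) \<subseteq> set_add (mul x y) (mul x z)) \<and>
     (\<forall>x y. mul x (- y) = set_neg (mul x y) \<and> mul (- x) y = set_neg (mul x y))"

definition hyperring_has_identity :: "('a \<Rightarrow> 'a \<Rightarrow> 'a set) \<Rightarrow> bool" where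
  "hyperring_has_identity mul \<longleftrightarrow> (\<exists>e. \<forall>x. x \<in> mul x e)"

definition hyperideal :: "('a::ab_group_add \<Rightarrow> 'a \<Rightarrow> 'a set) \<Rightarrow> 'a set \<Rightarrow> bool" where
  "hyperideal mul P \<longleftrightarrow> P \<noteq> {} \<and> (\<forall>x\<in>P. \<forall>y\<in>P. x - y \<in> P) \<and>
     (\<forall>r. \<forall>x\<in>P. mul r x \<subseteq> P)"

definition sdf_absorbing :: "('a::ab_group_add \<Rightarrow> 'a \<Rightarrow> 'a set) \<Rightarrow> 'a set \<Rightarrow> bool" where
  "sdf_absorbing mul P \<longleftrightarrow> hyperideal mul P \<and> P \<noteq> UNIV \<and>
     (\<forall>x y. x \<noteq> 0 \<longrightarrow> y \<noteq> 0 \<longrightarrow> set_diff (mul x x) (mul y y) \<subseteq> P \<longrightarrow>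
        x - y \<in> P \<or> x + y \<in> P)"

definition set_sum :: "('n::finite \<Rightarrow> 'a::ab_group_add set) \<Rightarrow> 'a set" where
  "set_sum S = {\<Sum>k\<in>UNIV. f k | f. \<forall>k. f k \<in> S k}"

definition mat_hmul :: "('a::ab_group_add \<Rightarrow> 'a \<Rightarrow> 'a set) \<Rightarrow>
    ('n::finite \<Rightarrow> 'n \<Rightarrow> 'a) \<Rightarrow> ('n \<Rightarrow> 'n \<Rightarrow> 'a) \<Rightarrow> ('n \<Rightarrow> 'n \<Rightarrow> 'a) set" where
  "mat_hmul mul A B = {C. \<forall>i j. C i j \<in> set_sum (\<lambda>k. mul (A i k) (B k j))}"

definition mat_set :: "'a set \<Rightarrow> ('n::finite \<Rightarrow> 'n \<Rightarrow> 'a) set" where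
  "mat_set P = {A. \<forall>i j. A i j \<in> P}"

end

theory Submission
  imports Defs
begin

text \<open>Embed \<open>x, y \<in> H\<close> as the matrices \<open>X, Y\<close> with a single nonzero entry at a
fixed diagonal position \<open>(k, k)\<close>. Modulo \<open>M\<^sub>m(P)\<close>, every element of \<open>X \<circ> X\<close> is concentrated
in the entry \<open>(k, k)\<close>, where it lies in \<open>x\<^sup>2 + P\<close>, since all other summands are hyperproducts with
a zero factor and hence lie in \<open>P\<close>. So \<open>x\<^sup>2 - y\<^sup>2 \<subseteq> P\<close> gives \<open>X\<^sup>2 - Y\<^sup>2 \<subseteq> M\<^sub>m(P)\<close>, and reading off
the \<open>(k, k)\<close> entry of \<open>X \<plusminus> Y \<in> M\<^sub>m(P)\<close> yields \<open>x \<plusminus> y \<in> P\<close>.\<close>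

lemma hyperideal_zero: "hyperideal mul P \<Longrightarrow> 0 \<in> P"
  unfolding hyperideal_def by (metis all_not_in_conv diff_self)

lemma hyperideal_diff: "hyperideal mul P \<Longrightarrow> a \<in> P \<Longrightarrow> b \<in> P \<Longrightarrow> a - b \<in> P"
  unfolding hyperideal_def by blast

lemma hyperideal_add:
  assumes "hyperideal mul P" "a \<in> P" "b \<in> P"
  shows "a + b \<in> P"
proof -
  have "0 - b \<in> P"
    using assms hyperideal_zero hyperideal_diff by metis
  then have "a - (0 - b) \<in> P"
    using assms hyperideal_diff by metis
  then show ?thesis by simp
qed

lemma hyperideal_sum:
  assumes "hyperideal mul P" "finite A" "\<And>k. k \<in> A \<Longrightarrow> f k \<in> P"
  shows "sum f A \<in> P"
  using assms(2,3)
  by (induction A rule: finite_induct)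
    (auto intro: hyperideal_add[OF assms(1)] hyperideal_zero[OF assms(1)])

lemma hyperideal_hmul_absorbs:
  assumes "comm_mult_hyperring mul" "hyperideal mul P" "x \<in> P \<or> y \<in> P"
  shows "mul x y \<subseteq> P"
  using assms unfolding comm_mult_hyperring_def hyperideal_def by metis

definition mat_single :: "'n \<Rightarrow> 'a::zero \<Rightarrow> 'n \<Rightarrow> 'n \<Rightarrow> 'a" where
  "mat_single k z = (\<lambda>i j. if i = k \<and> j = k then z else 0)"

lemma mat_single_eq_0_iff [simp]: "mat_single k z = 0 \<longleftrightarrow> z = 0"
  by (auto simp: mat_single_def fun_eq_iff)

lemma mat_single_add [simp]:
  "mat_single k x + mat_single k y = mat_single k (x + y :: 'a::monoid_add)"
  by (auto simp: mat_single_def fun_eq_iff)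

lemma mat_single_diff [simp]:
  "mat_single k x - mat_single k y = mat_single k (x - y :: 'a::group_add)"
  by (auto simp: mat_single_def fun_eq_iff)

lemma mat_single_in_mat_set_iff: "mat_single k z \<in> mat_set P \<longleftrightarrow> z \<in> P" if "0 \<in> P"
  using that by (auto simp: mat_single_def mat_set_def)

lemma mat_hmul_single_entries:
  fixes k :: "'n::finite"
  assumes cm: "comm_mult_hyperring mul" and hi: "hyperideal mul P"
    and C: "C \<in> mat_hmul mul (mat_single k x) (mat_single k y)"
  shows "C k k \<in> set_add (mul x y) P"
    and "(i, j) \<noteq> (k, k) \<Longrightarrow> C i j \<in> P"
proof -
  have entry: "\<exists>f. (\<forall>l. f l \<in> mul (mat_single k x i l) (mat_single k y l j)) \<and> C i j = sum f UNIV"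
    for i j
    using C unfolding mat_hmul_def set_sum_def by blast
  obtain f where f: "\<And>l. f l \<in> mul (mat_single k x k l) (mat_single k y l k)"
    and Cf: "C k k = sum f UNIV"
    using entry by blast
  have "f k \<in> mul x y"
    using f[of k] by (simp add: mat_single_def)
  moreover have "sum f (UNIV - {k}) \<in> P"
  proof (rule hyperideal_sum[OF hi])
    fix l assume "l \<in> UNIV - {k}"
    then show "f l \<in> P"
      using f[of l] hyperideal_hmul_absorbs[OF cm hi] hyperideal_zero[OF hi]
      by (auto simp: mat_single_def)
  qed simp
  moreover have "C k k = f k + sum f (UNIV - {k})"
    using Cf by (simp add: sum.remove)
  ultimately show "C k k \<in> set_add (mul x y) P"
    unfolding set_add_def by blast
  assume ij: "(i, j) \<noteq> (k, k)"
  obtain g where g: "\<And>l. g l \<in> mul (mat_single k x i l) (mat_single k y l j)"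
    and Cg: "C i j = sum g UNIV"
    using entry by blast
  have "g l \<in> P" for l
  proof -
    have "mat_single k x i l \<in> P \<or> mat_single k y l j \<in> P"
      using ij hyperideal_zero[OF hi] by (auto simp: mat_single_def)
    then show ?thesis
      using g[of l] hyperideal_hmul_absorbs[OF cm hi] by blast
  qed
  then show "C i j \<in> P"
    using Cg hyperideal_sum[OF hi, of UNIV g] by simp
qed

lemma mat_single_square_diff_subset:
  fixes k :: "'n::finite"
  assumes cm: "comm_mult_hyperring mul" and hi: "hyperideal mul P"
    and xy: "set_diff (mul x x) (mul y y) \<subseteq> P"
  shows "set_diff (mat_hmul mul (mat_single k x) (mat_single k x))
                  (mat_hmul mul (mat_single k y) (mat_single k y)) \<subseteq> mat_set P"
proof
  fix M
  assume "M \<in> set_diff (mat_hmul mul (mat_single k x) (mat_single k x))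
                        (mat_hmul mul (mat_single k y) (mat_single k y))"
  then obtain C D where C: "C \<in> mat_hmul mul (mat_single k x) (mat_single k x)"
    and D: "D \<in> mat_hmul mul (mat_single k y) (mat_single k y)" and M: "M = C - D"
    unfolding set_diff_def by blast
  have "M i j \<in> P" for i j
  proof (cases "(i, j) = (k, k)")
    case True
    obtain a p where a: "a \<in> mul x x" "p \<in> P" "C k k = a + p"
      using mat_hmul_single_entries(1)[OF cm hi C] unfolding set_add_def by blast
    obtain b q where b: "b \<in> mul y y" "q \<in> P" "D k k = b + q"
      using mat_hmul_single_entries(1)[OF cm hi D] unfolding set_add_def by blast
    have "a - b \<in> P"
      using xy a b unfolding set_diff_def by blast
    moreover have "p - q \<in> P"
      using a b hyperideal_diff[OF hi] by blast
    moreover have "M i j = (a - b) + (p - q)"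
    proof -
      have "M i j = C k k - D k k"
        using True M by simp
      then show ?thesis
        using a b by (simp add: algebra_simps)
    qed
    ultimately show ?thesis
      using hyperideal_add[OF hi] by simp
  next
    case False
    then show ?thesis
      using M mat_hmul_single_entries(2)[OF cm hi C] mat_hmul_single_entries(2)[OF cm hi D]
        hyperideal_diff[OF hi] by simp
  qed
  then show "M \<in> mat_set P"
    unfolding mat_set_def by blast
qed

theorem mainTheorem12:
  fixes mul :: "'a::ab_group_add \<Rightarrow> 'a \<Rightarrow> 'a set"
    and P :: "'a set"
  assumes "comm_mult_hyperring mul"
    and "hyperring_has_identity mul"
    and "hyperideal mul P" and "P \<noteq> UNIV"
    and "sdf_absorbing (mat_hmul mul) (mat_set P :: ('n::finite \<Rightarrow> 'n \<Rightarrow> 'a) set)"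
  shows "sdf_absorbing mul P"
proof -
  have "x - y \<in> P \<or> x + y \<in> P"
    if "x \<noteq> 0" "y \<noteq> 0" "set_diff (mul x x) (mul y y) \<subseteq> P" for x y
  proof -
    let ?X = "mat_single (undefined :: 'n) x" and ?Y = "mat_single (undefined :: 'n) y"
    have "set_diff (mat_hmul mul ?X ?X) (mat_hmul mul ?Y ?Y) \<subseteq> mat_set P"
      using mat_single_square_diff_subset assms(1,3) that(3) by blast
    moreover have "?X \<noteq> 0" "?Y \<noteq> 0"
      using that(1,2) by simp_all
    ultimately have "?X - ?Y \<in> mat_set P \<or> ?X + ?Y \<in> mat_set P"
      using assms(5) unfolding sdf_absorbing_def by blast
    then show ?thesis
      by (simp add: mat_single_in_mat_set_iff hyperideal_zero[OF assms(3)])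
  qed
  then show ?thesis
    unfolding sdf_absorbing_def using assms(3,4) by blast
qed

end
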